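(* Consider a collective decentralized POMDP (CDec-POMDP) with $M$ agents, finite local state space $S$, finite action set $A$, horizon $H$, initial local-state distribution $b_o$, transition functions $\phi_t(i'\mid i,j,\mathbf{n}_{\mathbf{s}_t})$, count-based observations $o(i,\mathbf{n}_{\mathbf{s}_t})$, local rewards $r_t(i,j,\mathbf{n}_{\mathbf{s}_t})$, and a homogeneous parameterized policy $\pi_t(j\mid i,o(i,\mathbf{n}_{\mathbf{s}_t}))$ with parameter vector $\theta$ (all as described in the context). Then $$\nabla_\theta V_1(\pi)=\sum_{t=1}^H \mathbb{E}_{\mathbf{s}_t,\mathbf{a}_t\mid b_o,\pi}\Big[Q^\pi_t(\mathbf{s}_t,\mathbf{a}_t)\sum_{i\in S,\,j\in A} n_t(i,j)\,\nabla_\theta\log\pi_t\big(j\mid i,o(i,\mathbf{n}_{\mathbf{s}_t})\big)\Big].$$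
   Context: CDec-POMDP: there are $M$ agents; each agent $m$ has a local state $s^m_t\in S$ and action $a^m_t\in A$ at each time $t=1,\dots,H$. The joint state and joint action are $\mathbf{s}_t=(s^1_t,\dots,s^M_t)$, $\mathbf{a}_t=(a^1_t,\dots,a^M_t)$. Counts: $n_t(i)=|\{m: s^m_t=i\}|$, $n_t(i,j)=|\{m:(s^m_t,a^m_t)=(i,j)\}|$, $n_t(i,j,i')=|\{m:(s^m_t,a^m_t,s^m_{t+1})=(i,j,i')\}|$; the count table $\mathbf{n}_{\mathbf{s}_t}=(n_t(i))_{i\in S}$. Initial local states are drawn i.i.d. from $b_o$. At time $t$, an agent in state $i$ observes $(i,o(i,\mathbf{n}_{\mathbf{s}_t}))$ for a fixed observation function $o$, and all agents independently choose actions according to the common policy $\pi_t(j\mid i,o(i,\mathbf{n}_{\mathbf{s}_t}))$, which is differentiable in $\theta$ with positive probabilities. Each agent then independently moves to $i'$ with probability $\phi_t(i'\mid i,j,\mathbf{n}_{\mathbf{s}_t})$ and receives reward $r_t(i,j,\mathbf{n}_{\mathbf{s}_t})$. The joint reward is $r_t(\mathbf{s}_t,\mathbf{a}_t)=\sum_{m=1}^M r_t(s^m_t,a^m_t,\mathbf{n}_{\mathbf{s}_t})$. The action-value function is defined by $Q^\pi_H(\mathbf{s}_H,\mathbf{a}_H)=r_H(\mathbf{s}_H,\mathbf{a}_H)$ and $Q^\pi_t(\mathbf{s}_t,\mathbf{a}_t)=r_t(\mathbf{s}_t,\mathbf{a}_t)+\sum_{\mathbf{s}_{t+1},\mathbf{a}_{t+1}}P^\pi(\mathbf{s}_{t+1},\mathbf{a}_{t+1}\mid\mathbf{s}_t,\mathbf{a}_t)Q^\pi_{t+1}(\mathbf{s}_{t+1},\mathbf{a}_{t+1})$,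 and $V_1(\pi)=\mathbb{E}_{\mathbf{s}_1,\mathbf{a}_1\mid b_o,\pi}[Q^\pi_1(\mathbf{s}_1,\mathbf{a}_1)]=\sum_{m=1}^M\sum_{t=1}^H\mathbb{E}[r_t(s^m_t,a^m_t,\mathbf{n}_{\mathbf{s}_t})]$. The expectation $\mathbb{E}_{\mathbf{s}_t,\mathbf{a}_t\mid b_o,\pi}$ is over the marginal distribution of $(\mathbf{s}_t,\mathbf{a}_t)$ under this process, and $n_t(i,j)$ inside it is the count induced by $(\mathbf{s}_t,\mathbf{a}_t)$. *)

theory Defs
  imports "HOL-Analysis.Analysis"
begin

text \<open>Time runs over 1..H.
  Parameters: b (initial local-state distribution b_o), phi t i j n i' (transition
  phi_t(i' | i,j,n)), ob i n (observation o(i,n)), r t i j n (local reward),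
  pol theta t i y j (policy pi_t(j | i, y) with parameter theta).\<close>

definition joint_set :: "nat \<Rightarrow> (nat \<Rightarrow> 'x) set" where
  "joint_set M = {0..<M} \<rightarrow>\<^sub>E UNIV"

definition cnt :: "nat \<Rightarrow> (nat \<Rightarrow> 's) \<Rightarrow> 's \<Rightarrow> nat" where
  "cnt M s i = card {m \<in> {0..<M}. s m = i}"

definition cnt2 :: "nat \<Rightarrow> (nat \<Rightarrow> 's) \<Rightarrow> (nat \<Rightarrow> 'a) \<Rightarrow> 's \<Rightarrow> 'a \<Rightarrow> nat" where
  "cnt2 M s a i j = card {m \<in> {0..<M}. s m = i \<and> a m = j}"

definition init_prob :: "nat \<Rightarrow> ('s \<Rightarrow> real) \<Rightarrow> (nat \<Rightarrow> 's) \<Rightarrow> real" where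
  "init_prob M b s = (\<Prod>m\<in>{0..<M}. b (s m))"

definition act_prob ::
  "nat \<Rightarrow> ('p \<Rightarrow> nat \<Rightarrow> 's \<Rightarrow> 'o \<Rightarrow> 'a \<Rightarrow> real) \<Rightarrow> ('s \<Rightarrow> ('s \<Rightarrow> nat) \<Rightarrow> 'o) \<Rightarrow> 'p
    \<Rightarrow> nat \<Rightarrow> (nat \<Rightarrow> 's) \<Rightarrow> (nat \<Rightarrow> 'a) \<Rightarrow> real" where
  "act_prob M pol ob \<theta> t s a = (\<Prod>m\<in>{0..<M}. pol \<theta> t (s m) (ob (s m) (cnt M s)) (a m))"

definition trans_prob ::
  "nat \<Rightarrow> (nat \<Rightarrow> 's \<Rightarrow> 'a \<Rightarrow> ('s \<Rightarrow> nat) \<Rightarrow> 's \<Rightarrow> real) \<Rightarrow> nat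
    \<Rightarrow> (nat \<Rightarrow> 's) \<Rightarrow> (nat \<Rightarrow> 'a) \<Rightarrow> (nat \<Rightarrow> 's) \<Rightarrow> real" where
  "trans_prob M phi t s a s' = (\<Prod>m\<in>{0..<M}. phi t (s m) (a m) (cnt M s) (s' m))"

definition joint_reward ::
  "nat \<Rightarrow> (nat \<Rightarrow> 's \<Rightarrow> 'a \<Rightarrow> ('s \<Rightarrow> nat) \<Rightarrow> real) \<Rightarrow> nat \<Rightarrow> (nat \<Rightarrow> 's) \<Rightarrow> (nat \<Rightarrow> 'a) \<Rightarrow> real" where
  "joint_reward M r t s a = (\<Sum>m\<in>{0..<M}. r t (s m) (a m) (cnt M s))"

text \<open>marg ... k s a = probability that (s_{k+1}, a_{k+1}) = (s, a).\<close>
primrec marg ::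
  "nat \<Rightarrow> ('s \<Rightarrow> real) \<Rightarrow> (nat \<Rightarrow> 's \<Rightarrow> 'a \<Rightarrow> ('s \<Rightarrow> nat) \<Rightarrow> 's \<Rightarrow> real)
   \<Rightarrow> ('p \<Rightarrow> nat \<Rightarrow> 's \<Rightarrow> 'o \<Rightarrow> 'a \<Rightarrow> real) \<Rightarrow> ('s \<Rightarrow> ('s \<Rightarrow> nat) \<Rightarrow> 'o) \<Rightarrow> 'p
   \<Rightarrow> nat \<Rightarrow> (nat \<Rightarrow> 's) \<Rightarrow> (nat \<Rightarrow> 'a) \<Rightarrow> real" where
  "marg M b phi pol ob \<theta> 0 s a = init_prob M b s * act_prob M pol ob \<theta> 1 s a"
| "marg M b phi pol ob \<theta> (Suc k) s' a' =
     (\<Sum>s\<in>joint_set M. \<Sum>a\<in>joint_set M.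
        marg M b phi pol ob \<theta> k s a * trans_prob M phi (Suc k) s a s'
        * act_prob M pol ob \<theta> (Suc (Suc k)) s' a')"

definition expect_t ::
  "nat \<Rightarrow> ('s \<Rightarrow> real) \<Rightarrow> (nat \<Rightarrow> 's \<Rightarrow> 'a \<Rightarrow> ('s \<Rightarrow> nat) \<Rightarrow> 's \<Rightarrow> real)
   \<Rightarrow> ('p \<Rightarrow> nat \<Rightarrow> 's \<Rightarrow> 'o \<Rightarrow> 'a \<Rightarrow> real) \<Rightarrow> ('s \<Rightarrow> ('s \<Rightarrow> nat) \<Rightarrow> 'o) \<Rightarrow> 'p
   \<Rightarrow> nat \<Rightarrow> ((nat \<Rightarrow> 's) \<Rightarrow> (nat \<Rightarrow> 'a) \<Rightarrow> real) \<Rightarrow> real" where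
  "expect_t M b phi pol ob \<theta> t f =
     (\<Sum>s\<in>joint_set M. \<Sum>a\<in>joint_set M. marg M b phi pol ob \<theta> (t - 1) s a * f s a)"

text \<open>Qrem k t: action value at time t when k steps remain (Q_t with k = H - t).\<close>
primrec Qrem ::
  "nat \<Rightarrow> (nat \<Rightarrow> 's \<Rightarrow> 'a \<Rightarrow> ('s \<Rightarrow> nat) \<Rightarrow> 's \<Rightarrow> real) \<Rightarrow> (nat \<Rightarrow> 's \<Rightarrow> 'a \<Rightarrow> ('s \<Rightarrow> nat) \<Rightarrow> real)
   \<Rightarrow> ('p \<Rightarrow> nat \<Rightarrow> 's \<Rightarrow> 'o \<Rightarrow> 'a \<Rightarrow> real) \<Rightarrow> ('s \<Rightarrow> ('s \<Rightarrow> nat) \<Rightarrow> 'o) \<Rightarrow> 'p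
   \<Rightarrow> nat \<Rightarrow> nat \<Rightarrow> (nat \<Rightarrow> 's) \<Rightarrow> (nat \<Rightarrow> 'a) \<Rightarrow> real" where
  "Qrem M phi r pol ob \<theta> 0 t s a = joint_reward M r t s a"
| "Qrem M phi r pol ob \<theta> (Suc k) t s a = joint_reward M r t s a +
     (\<Sum>s'\<in>joint_set M. \<Sum>a'\<in>joint_set M.
        trans_prob M phi t s a s' * act_prob M pol ob \<theta> (Suc t) s' a'
        * Qrem M phi r pol ob \<theta> k (Suc t) s' a')"

definition Qfun ::
  "nat \<Rightarrow> (nat \<Rightarrow> 's \<Rightarrow> 'a \<Rightarrow> ('s \<Rightarrow> nat) \<Rightarrow> 's \<Rightarrow> real) \<Rightarrow> (nat \<Rightarrow> 's \<Rightarrow> 'a \<Rightarrow> ('s \<Rightarrow> nat) \<Rightarrow> real)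
   \<Rightarrow> ('p \<Rightarrow> nat \<Rightarrow> 's \<Rightarrow> 'o \<Rightarrow> 'a \<Rightarrow> real) \<Rightarrow> ('s \<Rightarrow> ('s \<Rightarrow> nat) \<Rightarrow> 'o) \<Rightarrow> 'p
   \<Rightarrow> nat \<Rightarrow> nat \<Rightarrow> (nat \<Rightarrow> 's) \<Rightarrow> (nat \<Rightarrow> 'a) \<Rightarrow> real" where
  "Qfun M phi r pol ob \<theta> H t = Qrem M phi r pol ob \<theta> (H - t) t"

definition V1 ::
  "nat \<Rightarrow> ('s \<Rightarrow> real) \<Rightarrow> (nat \<Rightarrow> 's \<Rightarrow> 'a \<Rightarrow> ('s \<Rightarrow> nat) \<Rightarrow> 's \<Rightarrow> real)
   \<Rightarrow> (nat \<Rightarrow> 's \<Rightarrow> 'a \<Rightarrow> ('s \<Rightarrow> nat) \<Rightarrow> real)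
   \<Rightarrow> ('p \<Rightarrow> nat \<Rightarrow> 's \<Rightarrow> 'o \<Rightarrow> 'a \<Rightarrow> real) \<Rightarrow> ('s \<Rightarrow> ('s \<Rightarrow> nat) \<Rightarrow> 'o) \<Rightarrow> nat \<Rightarrow> 'p \<Rightarrow> real" where
  "V1 M b phi r pol ob H \<theta> = expect_t M b phi pol ob \<theta> 1 (Qfun M phi r pol ob \<theta> H 1)"

end

theory Submission
  imports Defs
begin

text \<open>Only the action probabilities depend on \<theta>. Writing the joint action probability as
  \<open>exp (\<Sum>m. ln \<pi>)\<close> shows that its derivative is itself times the count-weighted score
  \<open>\<Sum>i j. n(i,j) \<nabla>ln \<pi>(j|i,o)\<close>. Differentiating the backward recursion for Q by the product
  rule, the derivative of Q at time t collects, for every later time \<tau>, the score at \<tau> times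
  Q at \<tau>, weighted by the transition and action probabilities leading there; summing against
  the marginal at time t pushes that marginal forward to time \<tau>, which turns these nested sums
  into the expectations of the policy gradient formula.\<close>

lemma card_filter_atLeast0_lessThan_Suc:
  "card {m \<in> {0..<Suc n}. P m} = card {m \<in> {0..<n}. P m} + (if P n then 1 else 0)"
proof -
  have "{m \<in> {0..<Suc n}. P m} = {m \<in> {0..<n}. P m} \<union> (if P n then {n} else {})"
    by (auto simp: less_Suc_eq)
  then show ?thesis by (auto simp: card_insert_if)
qed

lemma sum_agents_eq_sum_cnt2:
  fixes f :: "'s::finite \<Rightarrow> 'a::finite \<Rightarrow> real"
  shows "(\<Sum>m\<in>{0..<M}. f (s m) (a m)) = (\<Sum>i\<in>UNIV. \<Sum>j\<in>UNIV. real (cnt2 M s a i j) * f i j)"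
proof (induction M)
  case 0
  then show ?case by (simp add: cnt2_def)
next
  case (Suc n)
  have cnt2_Suc: "real (cnt2 (Suc n) s a i j) * f i j =
      real (cnt2 n s a i j) * f i j + (if s n = i \<and> a n = j then f i j else 0)" for i j
    unfolding cnt2_def card_filter_atLeast0_lessThan_Suc by (simp add: distrib_right)
  have new_agent: "(\<Sum>i\<in>UNIV. \<Sum>j\<in>UNIV. if s n = i \<and> a n = j then f i j else 0) = f (s n) (a n)"
  proof -
    have "(\<Sum>j\<in>UNIV. if s n = i \<and> a n = j then f i j else 0) = (if s n = i then f i (a n) else 0)" for i
      by (cases "s n = i") simp_all
    then show ?thesis by simp
  qed
  show ?case
    using Suc by (simp add: cnt2_Suc sum.distrib new_agent)
qed

lemma sum_swap_nested_pairs: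
  "(\<Sum>x\<in>A. \<Sum>y\<in>B. \<Sum>z\<in>C. \<Sum>w\<in>D. f x y z w) =
   (\<Sum>z\<in>C. \<Sum>w\<in>D. \<Sum>x\<in>A. \<Sum>y\<in>B. (f x y z w :: 'b::comm_monoid_add))"
proof -
  have "(\<Sum>x\<in>A. \<Sum>y\<in>B. \<Sum>z\<in>C. \<Sum>w\<in>D. f x y z w) = (\<Sum>x\<in>A. \<Sum>z\<in>C. \<Sum>y\<in>B. \<Sum>w\<in>D. f x y z w)"
    by (rule sum.cong[OF refl], rule sum.swap)
  also have "\<dots> = (\<Sum>z\<in>C. \<Sum>x\<in>A. \<Sum>w\<in>D. \<Sum>y\<in>B. f x y z w)"
    by (subst sum.swap) (rule sum.cong[OF refl], rule sum.cong[OF refl], rule sum.swap)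
  also have "\<dots> = (\<Sum>z\<in>C. \<Sum>w\<in>D. \<Sum>x\<in>A. \<Sum>y\<in>B. f x y z w)"
    by (rule sum.cong[OF refl], rule sum.swap)
  finally show ?thesis .
qed

context
  fixes M :: nat
    and b :: "'s::finite \<Rightarrow> real"
    and phi :: "nat \<Rightarrow> 's \<Rightarrow> 'a::finite \<Rightarrow> ('s \<Rightarrow> nat) \<Rightarrow> 's \<Rightarrow> real"
    and ob :: "'s \<Rightarrow> ('s \<Rightarrow> nat) \<Rightarrow> 'o"
    and r :: "nat \<Rightarrow> 's \<Rightarrow> 'a \<Rightarrow> ('s \<Rightarrow> nat) \<Rightarrow> real"
    and pol :: "'p::euclidean_space \<Rightarrow> nat \<Rightarrow> 's \<Rightarrow> 'o \<Rightarrow> 'a \<Rightarrow> real"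
    and \<theta> :: 'p
begin

definition score :: "nat \<Rightarrow> (nat \<Rightarrow> 's) \<Rightarrow> (nat \<Rightarrow> 'a) \<Rightarrow> 'p \<Rightarrow> real" where
  "score t s a h = (\<Sum>i\<in>UNIV. \<Sum>j\<in>UNIV. real (cnt2 M s a i j) *
      frechet_derivative (\<lambda>x. ln (pol x t i (ob i (cnt M s)) j)) (at \<theta>) h)"

primrec Qrem_deriv :: "nat \<Rightarrow> nat \<Rightarrow> (nat \<Rightarrow> 's) \<Rightarrow> (nat \<Rightarrow> 'a) \<Rightarrow> 'p \<Rightarrow> real" where
  "Qrem_deriv 0 t s a h = 0"
| "Qrem_deriv (Suc k) t s a h = (\<Sum>s'\<in>joint_set M. \<Sum>a'\<in>joint_set M.
      trans_prob M phi t s a s' * act_prob M pol ob \<theta> (Suc t) s' a' *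
      (score (Suc t) s' a' h * Qrem M phi r pol ob \<theta> k (Suc t) s' a' + Qrem_deriv k (Suc t) s' a' h))"

context
  assumes pol_pos: "\<forall>x t i y j. pol x t i y j > 0"
    and pol_diff: "\<forall>t i y j x. (\<lambda>x'. pol x' t i y j) differentiable (at x)"
begin

lemma ln_pol_has_derivative:
  "((\<lambda>x. ln (pol x t i y j)) has_derivative frechet_derivative (\<lambda>x. ln (pol x t i y j)) (at \<theta>)) (at \<theta>)"
proof -
  obtain D where D: "((\<lambda>x. pol x t i y j) has_derivative D) (at \<theta>)"
    using pol_diff[rule_format, of t i y j \<theta>] by (auto simp: differentiable_def)
  have "((\<lambda>x. ln (pol x t i y j)) has_derivative (\<lambda>h. D h * inverse (pol \<theta> t i y j))) (at \<theta>)"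
    by (rule has_derivative_ln[OF _ D]) (use pol_pos in auto)
  then have "(\<lambda>x. ln (pol x t i y j)) differentiable (at \<theta>)"
    by (auto simp: differentiable_def)
  then show ?thesis
    by (simp add: frechet_derivative_works)
qed

lemma act_prob_has_derivative:
  "((\<lambda>x. act_prob M pol ob x t s a) has_derivative
     (\<lambda>h. act_prob M pol ob \<theta> t s a * score t s a h)) (at \<theta>)"
proof -
  let ?lnpol = "\<lambda>x m. ln (pol x t (s m) (ob (s m) (cnt M s)) (a m))"
  have exp_ln: "act_prob M pol ob x t s a = exp (\<Sum>m\<in>{0..<M}. ?lnpol x m)" for x
    unfolding act_prob_def using pol_pos by (simp add: exp_sum)
  have score_eq: "(\<Sum>m\<in>{0..<M}. frechet_derivative (\<lambda>x. ?lnpol x m) (at \<theta>) h) = score t s a h" for h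
    unfolding score_def
    by (rule sum_agents_eq_sum_cnt2[where f="\<lambda>i j. frechet_derivative (\<lambda>x. ln (pol x t i (ob i (cnt M s)) j)) (at \<theta>) h"])
  have "((\<lambda>x. exp (\<Sum>m\<in>{0..<M}. ?lnpol x m)) has_derivative
      (\<lambda>h. (\<Sum>m\<in>{0..<M}. frechet_derivative (\<lambda>x. ?lnpol x m) (at \<theta>) h) * exp (\<Sum>m\<in>{0..<M}. ?lnpol \<theta> m))) (at \<theta>)"
    by (intro has_derivative_exp has_derivative_sum ln_pol_has_derivative)
  then show ?thesis
    by (simp add: exp_ln[symmetric] score_eq mult.commute)
qed

lemma Qrem_has_derivative:
  "((\<lambda>x. Qrem M phi r pol ob x k t s a) has_derivative Qrem_deriv k t s a) (at \<theta>)"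
proof (induction k arbitrary: t s a)
  case 0
  then show ?case by (simp add: fun_eq_iff[symmetric] Qrem_deriv.simps(1)[abs_def])
next
  case (Suc k)
  show ?case
    unfolding Qrem.simps
    by (rule has_derivative_eq_rhs[OF has_derivative_add[OF has_derivative_const
          has_derivative_sum[OF has_derivative_sum[OF has_derivative_mult[OF
            has_derivative_mult[OF has_derivative_const act_prob_has_derivative] Suc.IH]]]]])
      (simp add: fun_eq_iff algebra_simps sum.distrib)
qed

text \<open>The marginal at time t is indexed by \<open>t - 1\<close>, hence the hypothesis \<open>1 \<le> t\<close>.\<close>

lemma marg_weighted_Qrem_deriv:
  assumes "1 \<le> t"
  shows "(\<Sum>s\<in>joint_set M. \<Sum>a\<in>joint_set M. marg M b phi pol ob \<theta> (t - 1) s a * Qrem_deriv k t s a h) =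
    (\<Sum>\<tau>\<in>{Suc t..t + k}. expect_t M b phi pol ob \<theta> \<tau>
        (\<lambda>s a. Qrem M phi r pol ob \<theta> (t + k - \<tau>) \<tau> s a * score \<tau> s a h))"
  using assms
proof (induction k arbitrary: t)
  case 0
  then show ?case by simp
next
  case (Suc k)
  let ?J = "joint_set M"
  let ?marg = "marg M b phi pol ob \<theta>"
  let ?X = "\<lambda>s' a'. score (Suc t) s' a' h * Qrem M phi r pol ob \<theta> k (Suc t) s' a' + Qrem_deriv k (Suc t) s' a' h"
  have marg_step: "?marg t s' a' = (\<Sum>s\<in>?J. \<Sum>a\<in>?J. ?marg (t - 1) s a
      * trans_prob M phi t s a s' * act_prob M pol ob \<theta> (Suc t) s' a')" for s' a'
    using marg.simps(2)[of M b phi pol ob \<theta> "t - 1" s' a'] Suc.prems by simp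
  have "(\<Sum>s\<in>?J. \<Sum>a\<in>?J. ?marg (t - 1) s a * Qrem_deriv (Suc k) t s a h)
     = (\<Sum>s\<in>?J. \<Sum>a\<in>?J. \<Sum>s'\<in>?J. \<Sum>a'\<in>?J. ?marg (t - 1) s a *
          trans_prob M phi t s a s' * act_prob M pol ob \<theta> (Suc t) s' a' * ?X s' a')"
    by (simp add: sum_distrib_left mult.assoc)
  also have "\<dots> = (\<Sum>s'\<in>?J. \<Sum>a'\<in>?J. \<Sum>s\<in>?J. \<Sum>a\<in>?J. ?marg (t - 1) s a *
          trans_prob M phi t s a s' * act_prob M pol ob \<theta> (Suc t) s' a' * ?X s' a')"
    by (rule sum_swap_nested_pairs)
  also have "\<dots> = (\<Sum>s'\<in>?J. \<Sum>a'\<in>?J. ?marg t s' a' * ?X s' a')"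
    by (simp add: marg_step sum_distrib_right)
  also have "\<dots> = expect_t M b phi pol ob \<theta> (Suc t)
        (\<lambda>s a. Qrem M phi r pol ob \<theta> k (Suc t) s a * score (Suc t) s a h)
      + (\<Sum>s'\<in>?J. \<Sum>a'\<in>?J. ?marg (Suc t - 1) s' a' * Qrem_deriv k (Suc t) s' a' h)"
    by (simp add: expect_t_def distrib_left sum.distrib mult.commute)
  also have "\<dots> = (\<Sum>\<tau>\<in>{Suc t..t + Suc k}. expect_t M b phi pol ob \<theta> \<tau>
        (\<lambda>s a. Qrem M phi r pol ob \<theta> (t + Suc k - \<tau>) \<tau> s a * score \<tau> s a h))"
    using Suc.IH[of "Suc t"] by (subst sum.atLeast_Suc_atMost) simp_all
  finally show ?case .
qed

lemma V1_has_derivative: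
  assumes "H \<ge> 1"
  shows "(V1 M b phi r pol ob H has_derivative
          (\<lambda>h. \<Sum>t\<in>{1..H}. expect_t M b phi pol ob \<theta> t
                (\<lambda>s a. Qfun M phi r pol ob \<theta> H t s a * score t s a h))) (at \<theta>)"
proof -
  let ?J = "joint_set M"
  let ?Q = "Qrem M phi r pol ob \<theta> (H - 1) 1"
  let ?p = "\<lambda>s a. init_prob M b s * act_prob M pol ob \<theta> 1 s a"
  have V1_eq: "V1 M b phi r pol ob H x = (\<Sum>s\<in>?J. \<Sum>a\<in>?J. (init_prob M b s * act_prob M pol ob x 1 s a)
            * Qrem M phi r pol ob x (H - 1) 1 s a)" for x
    by (simp add: V1_def expect_t_def Qfun_def)
  have deriv: "(V1 M b phi r pol ob H has_derivative
     (\<lambda>h. \<Sum>s\<in>?J. \<Sum>a\<in>?J. ?p s a * Qrem_deriv (H - 1) 1 s a h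
        + (init_prob M b s * (act_prob M pol ob \<theta> 1 s a * score 1 s a h)) * ?Q s a)) (at \<theta>)"
    unfolding V1_eq[abs_def]
    by (rule has_derivative_eq_rhs[OF has_derivative_sum[OF has_derivative_sum[OF has_derivative_mult[OF
            has_derivative_mult[OF has_derivative_const act_prob_has_derivative] Qrem_has_derivative]]]])
      (simp add: fun_eq_iff)
  have later_times: "(\<Sum>t\<in>{Suc 1..H}. expect_t M b phi pol ob \<theta> t
        (\<lambda>s a. Qfun M phi r pol ob \<theta> H t s a * score t s a h))
      = (\<Sum>s\<in>?J. \<Sum>a\<in>?J. ?p s a * Qrem_deriv (H - 1) 1 s a h)" for h
    using marg_weighted_Qrem_deriv[of 1 "H - 1" h] assms by (simp add: Qfun_def)
  have split_first: "(\<Sum>t\<in>{1..H}. g t) = g 1 + (\<Sum>t\<in>{Suc 1..H}. g t)" for g :: "nat \<Rightarrow> real"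
    using assms by (subst sum.atLeast_Suc_atMost) simp_all
  have "(\<Sum>t\<in>{1..H}. expect_t M b phi pol ob \<theta> t (\<lambda>s a. Qfun M phi r pol ob \<theta> H t s a * score t s a h))
      = (\<Sum>s\<in>?J. \<Sum>a\<in>?J. ?p s a * Qrem_deriv (H - 1) 1 s a h
        + (init_prob M b s * (act_prob M pol ob \<theta> 1 s a * score 1 s a h)) * ?Q s a)" for h
    unfolding split_first later_times
    by (simp add: expect_t_def Qfun_def sum.distrib algebra_simps)
  then show ?thesis
    using deriv by simp
qed

end

end

theorem theorem1:
  fixes M H :: nat
    and b :: "'s::finite \<Rightarrow> real"
    and phi :: "nat \<Rightarrow> 's \<Rightarrow> 'a::finite \<Rightarrow> ('s \<Rightarrow> nat) \<Rightarrow> 's \<Rightarrow> real"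
    and ob :: "'s \<Rightarrow> ('s \<Rightarrow> nat) \<Rightarrow> 'o"
    and r :: "nat \<Rightarrow> 's \<Rightarrow> 'a \<Rightarrow> ('s \<Rightarrow> nat) \<Rightarrow> real"
    and pol :: "'p::euclidean_space \<Rightarrow> nat \<Rightarrow> 's \<Rightarrow> 'o \<Rightarrow> 'a \<Rightarrow> real"
    and \<theta> :: 'p
  assumes H: "H \<ge> 1"
    and b_nonneg: "\<forall>i. b i \<ge> 0" and b_sum: "(\<Sum>i\<in>UNIV. b i) = 1"
    and phi_nonneg: "\<forall>t i j n i'. phi t i j n i' \<ge> 0"
    and phi_sum: "\<forall>t i j n. (\<Sum>i'\<in>UNIV. phi t i j n i') = 1"
    and pol_pos: "\<forall>x t i y j. pol x t i y j > 0"
    and pol_sum: "\<forall>x t i y. (\<Sum>j\<in>UNIV. pol x t i y j) = 1"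
    and pol_diff: "\<forall>t i y j x. (\<lambda>x'. pol x' t i y j) differentiable (at x)"
  shows "((\<lambda>x. V1 M b phi r pol ob H x) has_derivative
          (\<lambda>h. \<Sum>t\<in>{1..H}. expect_t M b phi pol ob \<theta> t
                (\<lambda>s a. Qfun M phi r pol ob \<theta> H t s a *
                   (\<Sum>i\<in>UNIV. \<Sum>j\<in>UNIV. real (cnt2 M s a i j) *
                      frechet_derivative (\<lambda>x. ln (pol x t i (ob i (cnt M s)) j)) (at \<theta>) h))))
         (at \<theta>)"
  using V1_has_derivative[OF pol_pos pol_diff H] by (simp add: score_def)

end
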